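(* A well-founded order $P$ is up-regular if and only if for every trunk $T$ of $P$ such that the set of levels of $P$ meeting $T$ has a largest element $h$, the set $T\cup L_h$ is a trunk, where $L_h=\{x:\mathrm{Level}(x)=h\}$. In particular, in an up-regular well-founded order, every trunk that is maximal under inclusion and meets a highest level $L_h$ contains $L_h$.
   Context: Orders are partial orders; $x\sim y$ means $x\ne y$ and $x,y$ incomparable. For a well-founded order $P$, $\mathrm{Level}(x)=\sup\{\mathrm{Level}(y)+1:y<x\}$. An element $x$ is up-regular if for all $y,z$ with $\mathrm{Level}(x)<\mathrm{Level}(y)=\mathrm{Level}(z)$ we have $x<y\iff x<z$; $P$ is up-regular if all its elements are. A trunk of $P$ is a subset $T$ such that for pairwise distinct $x,y,z\in T$, $x\sim y$ and $y\sim z$ imply $x\sim z$. *)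

theory Defs
  imports Main
begin

definition incomp :: "'a::order \<Rightarrow> 'a \<Rightarrow> bool" (infix "\<sim>\<^sub>P" 50) where
  "x \<sim>\<^sub>P y \<longleftrightarrow> x \<noteq> y \<and> \<not> x \<le> y \<and> \<not> y \<le> x"

text \<open>For a well-founded order,
  Level x \<le> Level y  iff  for every x' < x there is y' < y with Level x' \<le> Level y'
  (since Level y = sup{Level y' + 1 : y' < y}). As the order is well-founded,
  this recursion (on the first argument) has a unique solution, given by the
  inductive definition below.\<close>
inductive level_le :: "'a::order \<Rightarrow> 'a \<Rightarrow> bool" where
  level_leI: "(\<And>x'. x' < x \<Longrightarrow> \<exists>y'. y' < y \<and> level_le x' y') \<Longrightarrow> level_le x y"

definition level_less :: "'a::order \<Rightarrow> 'a \<Rightarrow> bool" where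
  "level_less x y \<longleftrightarrow> \<not> level_le y x"

definition level_eq :: "'a::order \<Rightarrow> 'a \<Rightarrow> bool" where
  "level_eq x y \<longleftrightarrow> level_le x y \<and> level_le y x"

definition level_set :: "'a::order \<Rightarrow> 'a set" where
  "level_set h = {x. level_eq x h}"

definition up_regular_elem :: "'a::order \<Rightarrow> bool" where
  "up_regular_elem x \<longleftrightarrow>
     (\<forall>y z. level_less x y \<and> level_eq y z \<longrightarrow> (x < y \<longleftrightarrow> x < z))"

definition up_regular :: "'a::order itself \<Rightarrow> bool" where
  "up_regular _ \<longleftrightarrow> (\<forall>x::'a. up_regular_elem x)"

definition trunk :: "'a::order set \<Rightarrow> bool" where
  "trunk T \<longleftrightarrow> (\<forall>x\<in>T. \<forall>y\<in>T. \<forall>z\<in>T. x \<noteq> y \<and> y \<noteq> z \<and> x \<noteq> z \<and>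
      x \<sim>\<^sub>P y \<and> y \<sim>\<^sub>P z \<longrightarrow> x \<sim>\<^sub>P z)"

definition maximal_trunk :: "'a::order set \<Rightarrow> bool" where
  "maximal_trunk T \<longleftrightarrow> trunk T \<and> (\<forall>S. trunk S \<and> T \<subseteq> S \<longrightarrow> S = T)"

end

theory Submission
  imports Defs
begin

text \<open>Distinct elements of one level are incomparable. If h lies on the highest level met by a
  trunk T, up-regularity says that each element of T on a lower level is below either all or none
  of the elements of the level L of h, so T \<union> L behaves like T with the whole of L collapsed
  to h. Conversely, if up-regularity fails because x < y but not x < z for some z on the level of
  y, then extending the trunk {x, z} by that level gives x \<sim> z \<sim> y although x < y.\<close>

lemma incomp_commute: "x \<sim>\<^sub>P y \<longleftrightarrow> y \<sim>\<^sub>P x"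
  unfolding incomp_def by auto

lemma level_le_iff: "level_le x y \<longleftrightarrow> (\<forall>x'. x' < x \<longrightarrow> (\<exists>y'. y' < y \<and> level_le x' y'))"
  by (subst level_le.simps) blast

lemma trunkD:
  "trunk T \<Longrightarrow> x \<in> T \<Longrightarrow> y \<in> T \<Longrightarrow> z \<in> T \<Longrightarrow> x \<noteq> z
    \<Longrightarrow> x \<sim>\<^sub>P y \<Longrightarrow> y \<sim>\<^sub>P z \<Longrightarrow> x \<sim>\<^sub>P z"
  unfolding trunk_def incomp_def by blast

lemma trunk_Un_collapsible:
  assumes "trunk T" "h \<in> T" "h \<in> L"
    and L_incomp: "\<And>u v. u \<in> L \<Longrightarrow> v \<in> L \<Longrightarrow> u \<noteq> v \<Longrightarrow> u \<sim>\<^sub>P v"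
    and collapse: "\<And>t u. t \<in> T - L \<Longrightarrow> u \<in> L \<Longrightarrow> t \<sim>\<^sub>P u \<longleftrightarrow> t \<sim>\<^sub>P h"
  shows "trunk (T \<union> L)"
  unfolding trunk_def
proof (intro ballI impI)
  \<comment> \<open>c collapses L onto h and preserves incomparability of elements not both in L\<close>
  define c where "c x = (if x \<in> L then h else x)" for x
  have c_mem: "c x \<in> T" if "x \<in> T \<union> L" for x
    using that assms(2) unfolding c_def by auto
  have c_incomp: "c x \<noteq> c y \<and> (x \<sim>\<^sub>P y \<longleftrightarrow> c x \<sim>\<^sub>P c y)"
    if "x \<in> T \<union> L" "y \<in> T \<union> L" "x \<noteq> y" "\<not> (x \<in> L \<and> y \<in> L)" for x y
    using that collapse[of x y] collapse[of y x] assms(3) by (auto simp: c_def incomp_commute)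
  fix x y z assume mem: "x \<in> T \<union> L" "y \<in> T \<union> L" "z \<in> T \<union> L"
    and H: "x \<noteq> y \<and> y \<noteq> z \<and> x \<noteq> z \<and> x \<sim>\<^sub>P y \<and> y \<sim>\<^sub>P z"
  show "x \<sim>\<^sub>P z"
  proof (cases "x \<in> L \<and> z \<in> L")
    case True
    then show ?thesis using L_incomp H by blast
  next
    case False
    then have xz: "c x \<noteq> c z" "x \<sim>\<^sub>P z \<longleftrightarrow> c x \<sim>\<^sub>P c z"
      using c_incomp mem H by blast+
    consider "x \<in> L" "y \<in> L" | "y \<in> L" "z \<in> L" | "\<not> (x \<in> L \<and> y \<in> L)" "\<not> (y \<in> L \<and> z \<in> L)"
      by blast
    then show ?thesis
    proof cases
      case 1
      then show ?thesis using xz c_incomp[of y z] mem H False unfolding c_def by auto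
    next
      case 2
      then show ?thesis using xz c_incomp[of x y] mem H False unfolding c_def by auto
    next
      case 3
      then have "c x \<sim>\<^sub>P c y" "c y \<sim>\<^sub>P c z"
        using c_incomp mem H by blast+
      then show ?thesis
        using xz trunkD[OF \<open>trunk T\<close> c_mem c_mem c_mem] mem by blast
    qed
  qed
qed

context
  assumes wf: "wf {(x, y). x < (y::'a::order)}"
begin

lemma level_le_refl: "level_le x (x::'a)"
  using wf
proof (induction x rule: wf_induct_rule)
  case (less x)
  then show ?case by (subst level_le_iff) auto
qed

lemma level_le_trans: "level_le x y \<Longrightarrow> level_le y z \<Longrightarrow> level_le (x::'a) z"
  using wf
proof (induction x arbitrary: y z rule: wf_induct_rule)
  case (less x)
  show ?case
  proof (subst level_le_iff, intro allI impI)
    fix x' assume "x' < x"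
    then obtain y' where y': "y' < y" "level_le x' y'" using less(2) level_le_iff by blast
    then obtain z' where "z' < z" "level_le y' z'" using less(3) level_le_iff by blast
    then show "\<exists>z'. z' < z \<and> level_le x' z'" using less(1) \<open>x' < x\<close> y' by blast
  qed
qed

lemma level_le_total: "level_le x y \<or> level_le y (x::'a)"
  using wf
proof (induction x arbitrary: y rule: wf_induct_rule)
  case (less x)
  show ?case
  proof (rule ccontr)
    assume "\<not> ?case"
    then obtain x' y' where "x' < x" "\<forall>y''. y'' < y \<longrightarrow> \<not> level_le x' y''"
      and "y' < y" "\<forall>x''. x'' < x \<longrightarrow> \<not> level_le y' x''"
      using level_le_iff by metis
    then show False using less[of x' y'] by auto
  qed
qed

lemma not_level_le_if_greater: "y < x \<Longrightarrow> \<not> level_le x (y::'a)"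
proof
  show "y < x \<Longrightarrow> level_le x y \<Longrightarrow> False"
    using wf
  proof (induction x arbitrary: y rule: wf_induct_rule)
    case (less x)
    then obtain y' where "y' < y" "level_le y y'" using level_le_iff by blast
    then show ?case using less by blast
  qed
qed

lemma level_less_if_less: "x < y \<Longrightarrow> level_less x (y::'a)"
  unfolding level_less_def using not_level_le_if_greater .

lemma level_le_if_le: "x \<le> y \<Longrightarrow> level_le x (y::'a)"
  using level_le_refl level_le_iff[of x y] by (meson less_le_trans)

lemma level_less_le_trans: "level_less x y \<Longrightarrow> level_le y z \<Longrightarrow> level_less x (z::'a)"
  unfolding level_less_def using level_le_trans by blast

lemma incomp_if_level_eq: "level_eq x y \<Longrightarrow> x \<noteq> y \<Longrightarrow> x \<sim>\<^sub>P (y::'a)"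
  unfolding incomp_def level_eq_def using level_less_if_less unfolding level_less_def
  by (metis order.not_eq_order_implies_strict)

lemma incomp_iff_if_level_less: "level_less x y \<Longrightarrow> x \<sim>\<^sub>P y \<longleftrightarrow> \<not> x < (y::'a)"
  unfolding incomp_def level_less_def using level_le_refl level_le_if_le
  by (metis order.order_iff_strict)

lemma up_regular_elem_incomp_iff:
  assumes "up_regular_elem x" "level_less x y" "level_eq y (z::'a)"
  shows "x \<sim>\<^sub>P y \<longleftrightarrow> x \<sim>\<^sub>P z"
proof -
  have "level_less x z"
    using assms(2,3) level_less_le_trans unfolding level_eq_def by blast
  moreover have "x < y \<longleftrightarrow> x < z"
    using assms unfolding up_regular_elem_def by blast
  ultimately show ?thesis
    using assms(2) incomp_iff_if_level_less by blast
qed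

lemma trunk_Un_top_level_if_up_regular:
  fixes T :: "'a set"
  assumes up_reg: "up_regular TYPE('a)" and "trunk T" "h \<in> T"
    and below_h: "\<forall>t\<in>T. level_le t h"
  shows "trunk (T \<union> level_set h)"
proof (rule trunk_Un_collapsible)
  show "h \<in> level_set h"
    unfolding level_set_def level_eq_def by (simp add: level_le_refl)
  show "u \<sim>\<^sub>P v" if "u \<in> level_set h" "v \<in> level_set h" "u \<noteq> v" for u v
    using that incomp_if_level_eq level_le_trans
    unfolding level_set_def level_eq_def by blast
  show "t \<sim>\<^sub>P u \<longleftrightarrow> t \<sim>\<^sub>P h" if "t \<in> T - level_set h" "u \<in> level_set h" for t u
  proof (rule up_regular_elem_incomp_iff)
    show "up_regular_elem t"
      using up_reg unfolding up_regular_def by blast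
    show "level_eq u h"
      using that(2) unfolding level_set_def by blast
    then show "level_less t u"
      using that(1) below_h level_le_trans
      unfolding level_set_def level_eq_def level_less_def by blast
  qed
qed (use assms in auto)

lemma up_regular_if_trunk_Un_top_level:
  assumes ext: "\<And>(T::'a set) h. trunk T \<Longrightarrow> h \<in> T \<Longrightarrow> \<forall>t\<in>T. level_le t h
                 \<Longrightarrow> trunk (T \<union> level_set h)"
  shows "up_regular TYPE('a)"
proof -
  have "x < z" if xy: "level_less x y" "x < y" and yz: "level_eq y z" for x y z :: 'a
  proof (rule ccontr)
    assume "\<not> x < z"
    have xz: "level_less x z"
      using xy yz level_less_le_trans unfolding level_eq_def by blast
    then have "x \<sim>\<^sub>P z"
      using \<open>\<not> x < z\<close> incomp_iff_if_level_less by blast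
    moreover have "y \<noteq> z"
      using \<open>x < y\<close> \<open>\<not> x < z\<close> by blast
    then have "z \<sim>\<^sub>P y"
      using yz incomp_if_level_eq incomp_commute by blast
    moreover have "trunk ({x, z} \<union> level_set z)"
    proof (rule ext)
      show "trunk {x, z}"
        unfolding trunk_def by auto
      show "\<forall>t\<in>{x, z}. level_le t z"
        using xz level_le_refl level_le_total unfolding level_less_def by auto
    qed simp
    moreover have "y \<in> level_set z"
      using yz unfolding level_set_def by blast
    ultimately have "x \<sim>\<^sub>P y"
      using \<open>x < y\<close> by (intro trunkD[of "{x, z} \<union> level_set z" x z y]) (auto simp: incomp_def)
    with \<open>x < y\<close> show False
      unfolding incomp_def by auto
  qed
  then show ?thesis
    unfolding up_regular_def up_regular_elem_def level_eq_def
    using level_less_le_trans by blast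
qed

end

theorem mainTheorem12:
  assumes wf: "wf {(x, y). x < (y::'a::order)}"
  shows "(up_regular TYPE('a) \<longleftrightarrow>
           (\<forall>(T::'a set) h. trunk T \<and> h \<in> T \<and> (\<forall>t\<in>T. level_le t h)
                  \<longrightarrow> trunk (T \<union> level_set h)))
       \<and> (up_regular TYPE('a) \<longrightarrow>
           (\<forall>(T::'a set) h. maximal_trunk T \<and> h \<in> T \<and> (\<forall>t\<in>T. level_le t h)
                  \<longrightarrow> level_set h \<subseteq> T))"
proof (intro conjI iffI allI impI)
  show "up_regular TYPE('a)"
    if "\<forall>(T::'a set) h. trunk T \<and> h \<in> T \<and> (\<forall>t\<in>T. level_le t h) \<longrightarrow> trunk (T \<union> level_set h)"
    using up_regular_if_trunk_Un_top_level[OF wf] that by blast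
next
  fix T :: "'a set" and h
  assume "up_regular TYPE('a)"
  then show "trunk (T \<union> level_set h)" if "trunk T \<and> h \<in> T \<and> (\<forall>t\<in>T. level_le t h)"
    using trunk_Un_top_level_if_up_regular[OF wf] that by blast
  show "level_set h \<subseteq> T" if "maximal_trunk T \<and> h \<in> T \<and> (\<forall>t\<in>T. level_le t h)"
    using trunk_Un_top_level_if_up_regular[OF wf \<open>up_regular TYPE('a)\<close>, of T h] that
    unfolding maximal_trunk_def by blast
qed

end
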